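(* Let $k>0$ be an integer and let $U_k$ be the random variable on $G(n,p)$ counting proper star $k$-separations. Then \[\mathbb E(U_k)=n\binom{n-1}{k}(1-p)^k\Big[\big(p+(1-p)^{k+1}\big)^{n-k-1}+\big(1-p^{n-k-1}\big)\big(1-(1-p)^{k(n-k-1)}\big)-1\Big].\]
   Context: $G(n,p)$ is the Erdős–Rényi random graph on vertex set $V$, $|V|=n$, each edge independently present with probability $p$. For a graph $\Delta$ with vertex set $W$, a separation is $S\subset W$ with $S\ne\varnothing$, $S\ne W$ and no edges between $S$ and $W\setminus S$. $\mathrm{st}(a)$ is $a$ with its neighbours. A star separation of $\Gamma$ is a pair $(a,S)$ with $a\in V$, $S\subset V\setminus\mathrm{st}(a)$, such that $S$ is a separation of the full subgraph $\Gamma\setminus\mathrm{st}(a)$; it is a star $k$-separation if $|S|=k$, and it is proper if $S$ is not a separation of $\Gamma$ itself. *)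

theory Defs
  imports Complex_Main
begin

text \<open>Graphs on the vertex set V = {..<n}, given by their edge sets
  (sets of 2-element subsets of V).\<close>

definition all_edges :: "nat \<Rightarrow> nat set set" where
  "all_edges n = {e. \<exists>u v. u < n \<and> v < n \<and> u \<noteq> v \<and> e = {u, v}}"

definition gnp_prob :: "nat \<Rightarrow> real \<Rightarrow> nat set set \<Rightarrow> real" where
  "gnp_prob n p E = p ^ card E * (1 - p) ^ (card (all_edges n) - card E)"

definition gnp_expectation :: "nat \<Rightarrow> real \<Rightarrow> (nat set set \<Rightarrow> real) \<Rightarrow> real" where
  "gnp_expectation n p f = (\<Sum>E\<in>Pow (all_edges n). gnp_prob n p E * f E)"

definition st :: "nat \<Rightarrow> nat set set \<Rightarrow> nat \<Rightarrow> nat set" where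
  "st n E a = insert a {v. v < n \<and> {a, v} \<in> E}"

definition is_separation :: "nat set set \<Rightarrow> nat set \<Rightarrow> nat set \<Rightarrow> bool" where
  "is_separation E W S \<longleftrightarrow> S \<subseteq> W \<and> S \<noteq> {} \<and> S \<noteq> W \<and>
     (\<forall>u\<in>S. \<forall>v\<in>W - S. {u, v} \<notin> E)"

definition star_separation :: "nat \<Rightarrow> nat set set \<Rightarrow> nat \<Rightarrow> nat set \<Rightarrow> bool" where
  "star_separation n E a S \<longleftrightarrow> a < n \<and> S \<subseteq> {..<n} - st n E a \<and>
     is_separation E ({..<n} - st n E a) S"

definition proper_star_k_separation :: "nat \<Rightarrow> nat set set \<Rightarrow> nat \<Rightarrow> nat \<Rightarrow> nat set \<Rightarrow> bool" where
  "proper_star_k_separation n E k a S \<longleftrightarrow> star_separation n E a S \<and> card S = k \<and>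
     \<not> is_separation E {..<n} S"

definition U :: "nat \<Rightarrow> nat \<Rightarrow> nat set set \<Rightarrow> nat" where
  "U n k E = card {(a, S). proper_star_k_separation n E k a S}"

end

theory Submission
  imports Defs "HOL-Library.Disjoint_Sets"
begin

text \<open>Fix a centre \<open>a\<close> and a \<open>k\<close>-set \<open>S\<close>, and let \<open>T\<close> be the remaining \<open>m = n - k - 1\<close>
  vertices. Then \<open>(a, S)\<close> is a proper star separation iff no edge joins \<open>a\<close> to \<open>S\<close>, every
  \<open>v \<in> T\<close> is adjacent to \<open>a\<close> or has no neighbour in \<open>S\<close>, not every \<open>v \<in> T\<close> is adjacent
  to \<open>a\<close>, and not every \<open>v \<in> T\<close> avoids \<open>S\<close>. These conditions only inspect the pairwise
  disjoint edge sets joining \<open>a\<close> to \<open>S\<close> and each \<open>v\<close> to \<open>S \<union> {a}\<close>, so they are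
  independent across \<open>v\<close>; inclusion-exclusion over the two negated conditions gives the probability
  \<open>(1-p)^k ((p + (1-p)^(k+1))^m - p^m - (1-p)^(km) + p^m (1-p)^(km))\<close> for each of the
  \<open>n (n-1 choose k)\<close> candidates. All computations are polynomial identities in \<open>p\<close>.\<close>

definition bernoulli_weight :: "real \<Rightarrow> 'a set \<Rightarrow> 'a set \<Rightarrow> real" where
  "bernoulli_weight p A X = (\<Prod>e\<in>A. if e \<in> X then p else 1 - p)"

definition bernoulli_expectation :: "real \<Rightarrow> 'a set \<Rightarrow> ('a set \<Rightarrow> real) \<Rightarrow> real" where
  "bernoulli_expectation p A f = (\<Sum>X\<in>Pow A. bernoulli_weight p A X * f X)"

lemma bernoulli_weight_Un:
  assumes "A \<inter> B = {}" "finite A" "finite B" "X \<subseteq> A" "Y \<subseteq> B"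
  shows "bernoulli_weight p (A \<union> B) (X \<union> Y) = bernoulli_weight p A X * bernoulli_weight p B Y"
proof -
  have "bernoulli_weight p A X = (\<Prod>e\<in>A. if e \<in> X \<union> Y then p else 1 - p)"
    "bernoulli_weight p B Y = (\<Prod>e\<in>B. if e \<in> X \<union> Y then p else 1 - p)"
    unfolding bernoulli_weight_def using assms by (auto intro!: prod.cong)
  then show ?thesis
    unfolding bernoulli_weight_def using assms by (simp add: prod.union_disjoint)
qed

lemma bernoulli_weight_empty: "finite A \<Longrightarrow> bernoulli_weight p A {} = (1 - p) ^ card A"
  by (simp add: bernoulli_weight_def)

lemma bernoulli_expectation_Un:
  assumes "A \<inter> B = {}" "finite A" "finite B"
  shows "bernoulli_expectation p (A \<union> B) (\<lambda>X. f (X \<inter> A) * g (X \<inter> B)) =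
    bernoulli_expectation p A f * bernoulli_expectation p B g"
proof -
  have split: "bij_betw (\<lambda>(X, Y). X \<union> Y) (Pow A \<times> Pow B) (Pow (A \<union> B))"
    by (rule bij_betw_byWitness[where f' = "\<lambda>E. (E \<inter> A, E \<inter> B)"]) (use assms in auto)
  have "bernoulli_expectation p A f * bernoulli_expectation p B g =
      (\<Sum>(X, Y)\<in>Pow A \<times> Pow B. bernoulli_weight p A X * f X * (bernoulli_weight p B Y * g Y))"
    unfolding bernoulli_expectation_def by (simp add: sum_product sum.cartesian_product)
  also have "\<dots> = (\<Sum>(X, Y)\<in>Pow A \<times> Pow B. bernoulli_weight p (A \<union> B) (X \<union> Y) *
                     (f ((X \<union> Y) \<inter> A) * g ((X \<union> Y) \<inter> B)))"
  proof (intro sum.cong refl, clarify)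
    fix X Y assume "X \<subseteq> A" "Y \<subseteq> B"
    moreover from this have "(X \<union> Y) \<inter> A = X" "(X \<union> Y) \<inter> B = Y"
      using assms(1) by auto
    ultimately show "bernoulli_weight p A X * f X * (bernoulli_weight p B Y * g Y) =
        bernoulli_weight p (A \<union> B) (X \<union> Y) * (f ((X \<union> Y) \<inter> A) * g ((X \<union> Y) \<inter> B))"
      using bernoulli_weight_Un[OF assms] by simp
  qed
  also have "\<dots> = bernoulli_expectation p (A \<union> B) (\<lambda>X. f (X \<inter> A) * g (X \<inter> B))"
    unfolding bernoulli_expectation_def
    using sum.reindex_bij_betw[OF split] by (simp add: case_prod_unfold)
  finally show ?thesis ..
qed

lemma bernoulli_expectation_const:
  "finite A \<Longrightarrow> bernoulli_expectation p A (\<lambda>_. c) = c"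
proof (induction A rule: finite_induct)
  case empty
  then show ?case by (simp add: bernoulli_expectation_def bernoulli_weight_def)
next
  case (insert e A)
  have "Pow {e} = {{}, {e}}" by auto
  then have one: "bernoulli_expectation p {e} (\<lambda>_. 1) = 1"
    by (simp add: bernoulli_expectation_def bernoulli_weight_def)
  have "bernoulli_expectation p ({e} \<union> A) (\<lambda>X. (\<lambda>_. 1) (X \<inter> {e}) * (\<lambda>_. c) (X \<inter> A)) =
      bernoulli_expectation p {e} (\<lambda>_. 1) * bernoulli_expectation p A (\<lambda>_. c)"
    by (rule bernoulli_expectation_Un) (use insert in auto)
  then show ?case using one insert.IH by simp
qed

lemma bernoulli_expectation_restrict:
  assumes "finite A" "B \<subseteq> A"
  shows "bernoulli_expectation p A (\<lambda>X. f (X \<inter> B)) = bernoulli_expectation p B f"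
proof -
  have "bernoulli_expectation p (B \<union> (A - B)) (\<lambda>X. f (X \<inter> B) * (\<lambda>_. 1) (X \<inter> (A - B))) =
      bernoulli_expectation p B f * bernoulli_expectation p (A - B) (\<lambda>_. 1)"
    using assms by (intro bernoulli_expectation_Un) (auto intro: finite_subset)
  with assms show ?thesis
    by (simp add: bernoulli_expectation_const Un_absorb1)
qed

lemma bernoulli_expectation_add:
  "bernoulli_expectation p A (\<lambda>X. f X + g X) = bernoulli_expectation p A f + bernoulli_expectation p A g"
  by (simp add: bernoulli_expectation_def distrib_left sum.distrib)

lemma bernoulli_expectation_diff:
  "bernoulli_expectation p A (\<lambda>X. f X - g X) = bernoulli_expectation p A f - bernoulli_expectation p A g"
  by (simp add: bernoulli_expectation_def right_diff_distrib sum_subtractf)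

lemma bernoulli_expectation_sum:
  "bernoulli_expectation p A (\<lambda>X. \<Sum>i\<in>I. f i X) = (\<Sum>i\<in>I. bernoulli_expectation p A (f i))"
  unfolding bernoulli_expectation_def by (simp add: sum_distrib_left sum.swap[of _ "Pow A"])

lemma bernoulli_expectation_indicator_eq:
  assumes "finite A" "G \<subseteq> A"
  shows "bernoulli_expectation p A (\<lambda>X. of_bool (X = G)) = bernoulli_weight p A G"
proof -
  have "bernoulli_expectation p A (\<lambda>X. of_bool (X = G)) =
      (\<Sum>X\<in>Pow A. if X = G then bernoulli_weight p A X else 0)"
    unfolding bernoulli_expectation_def by (intro sum.cong) auto
  then show ?thesis using assms by simp
qed

lemma bernoulli_expectation_independent_blocks:
  assumes "finite \<Omega>" "finite I" "\<And>i. i \<in> I \<Longrightarrow> A i \<subseteq> \<Omega>" "disjoint_family_on A I"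
  shows "bernoulli_expectation p \<Omega> (\<lambda>X. of_bool (\<forall>i\<in>I. P i (X \<inter> A i))) =
    (\<Prod>i\<in>I. bernoulli_expectation p (A i) (\<lambda>X. of_bool (P i X)))"
proof -
  have fin: "finite (A i)" if "i \<in> I" for i
    using assms(1,3) that by (meson finite_subset)
  have union: "bernoulli_expectation p (\<Union>(A ` I)) (\<lambda>X. of_bool (\<forall>i\<in>I. P i (X \<inter> A i))) =
    (\<Prod>i\<in>I. bernoulli_expectation p (A i) (\<lambda>X. of_bool (P i X)))"
    using assms(2,4) fin
  proof (induction I rule: finite_induct)
    case empty
    then show ?case by (simp add: bernoulli_expectation_const)
  next
    case (insert i I)
    let ?U = "\<Union>(A ` I)"
    have disj: "A i \<inter> ?U = {}"
      using insert.hyps(2) insert.prems(1) by (fastforce simp: disjoint_family_on_def)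
    have "X \<inter> ?U \<inter> A j = X \<inter> A j" if "j \<in> I" for X j
      using that by blast
    then have "(\<forall>j\<in>insert i I. P j (X \<inter> A j)) \<longleftrightarrow>
        P i (X \<inter> A i) \<and> (\<forall>j\<in>I. P j (X \<inter> ?U \<inter> A j))" for X
      by simp
    then have "bernoulli_expectation p (A i \<union> ?U) (\<lambda>X. of_bool (\<forall>j\<in>insert i I. P j (X \<inter> A j))) =
        bernoulli_expectation p (A i \<union> ?U) (\<lambda>X. of_bool (P i (X \<inter> A i)) *
          of_bool (\<forall>j\<in>I. P j (X \<inter> ?U \<inter> A j)))"
      by (simp add: of_bool_conj)
    also have "\<dots> = bernoulli_expectation p (A i) (\<lambda>X. of_bool (P i X)) *
        bernoulli_expectation p ?U (\<lambda>X. of_bool (\<forall>j\<in>I. P j (X \<inter> A j)))"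
      using disj insert.prems(2) insert.hyps(1)
      by (intro bernoulli_expectation_Un[where f = "\<lambda>Y. of_bool (P i Y)"]) auto
    finally show ?case
      using insert by (simp add: disjoint_family_on_insert)
  qed
  have "X \<inter> \<Union>(A ` I) \<inter> A i = X \<inter> A i" if "i \<in> I" for X i
    using that by blast
  then have "bernoulli_expectation p \<Omega> (\<lambda>X. of_bool (\<forall>i\<in>I. P i (X \<inter> A i))) =
      bernoulli_expectation p \<Omega> (\<lambda>X. of_bool (\<forall>i\<in>I. P i (X \<inter> \<Union>(A ` I) \<inter> A i)))"
    by simp
  also have "\<dots> = bernoulli_expectation p (\<Union>(A ` I)) (\<lambda>X. of_bool (\<forall>i\<in>I. P i (X \<inter> A i)))"
    using assms(1,3) by (intro bernoulli_expectation_restrict) auto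
  finally show ?thesis
    using union by simp
qed

lemma bernoulli_prob_member:
  assumes "finite A" "e \<in> A"
  shows "bernoulli_expectation p A (\<lambda>X. of_bool (e \<in> X)) = p"
proof -
  have "bernoulli_expectation p A (\<lambda>X. of_bool (e \<in> X \<inter> {e})) =
      bernoulli_expectation p {e} (\<lambda>X. of_bool (e \<in> X))"
    using assms by (intro bernoulli_expectation_restrict) auto
  moreover have "Pow {e} = {{}, {e}}" by auto
  ultimately show ?thesis
    by (simp add: bernoulli_expectation_def bernoulli_weight_def)
qed

lemma bernoulli_prob_avoid:
  assumes "finite A" "C \<subseteq> A"
  shows "bernoulli_expectation p A (\<lambda>X. of_bool (X \<inter> C = {})) = (1 - p) ^ card C"
proof -
  have "finite C" using assms by (rule finite_subset[rotated])
  have "bernoulli_expectation p A (\<lambda>X. of_bool (X \<inter> C = {})) =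
      bernoulli_expectation p C (\<lambda>X. of_bool (X = {}))"
    using assms by (rule bernoulli_expectation_restrict)
  also have "\<dots> = (1 - p) ^ card C"
    using \<open>finite C\<close> by (simp add: bernoulli_expectation_indicator_eq bernoulli_weight_empty)
  finally show ?thesis .
qed

lemma bernoulli_prob_member_avoid:
  assumes "finite A" "insert e C \<subseteq> A" "e \<notin> C"
  shows "bernoulli_expectation p A (\<lambda>X. of_bool (e \<in> X \<and> X \<inter> C = {})) = p * (1 - p) ^ card C"
proof -
  have "finite C" using assms(1,2) by (meson finite_subset subset_insertI2 subset_refl)
  have "insert e C \<inter> C = C" by blast
  have "bernoulli_expectation p A (\<lambda>X. of_bool (e \<in> X \<and> X \<inter> C = {})) =
      bernoulli_expectation p ({e} \<union> C) (\<lambda>X. of_bool (e \<in> X \<and> X \<inter> C = {}))"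
    using assms(1,2) bernoulli_expectation_restrict[of A "{e} \<union> C" p
        "\<lambda>X. of_bool (e \<in> X \<and> X \<inter> C = {})"]
    by (simp add: Int_assoc \<open>insert e C \<inter> C = C\<close>)
  also have "\<dots> = bernoulli_expectation p ({e} \<union> C)
      (\<lambda>X. of_bool (e \<in> X \<inter> {e}) * of_bool (X \<inter> C \<inter> C = {}))"
    by (simp add: of_bool_conj)
  also have "\<dots> = bernoulli_expectation p {e} (\<lambda>X. of_bool (e \<in> X)) *
      bernoulli_expectation p C (\<lambda>X. of_bool (X \<inter> C = {}))"
    using assms(3) \<open>finite C\<close> by (intro bernoulli_expectation_Un) auto
  also have "\<dots> = p * (1 - p) ^ card C"
    using \<open>finite C\<close> by (simp add: bernoulli_prob_member bernoulli_prob_avoid)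
  finally show ?thesis .
qed

lemma bernoulli_prob_member_or_avoid:
  assumes "finite A" "insert e C \<subseteq> A" "e \<notin> C"
  shows "bernoulli_expectation p A (\<lambda>X. of_bool (e \<in> X \<or> X \<inter> C = {})) = p + (1 - p) ^ (card C + 1)"
proof -
  have "of_bool (e \<in> X \<or> X \<inter> C = {}) =
      of_bool (e \<in> X) + of_bool (X \<inter> C = {}) - (of_bool (e \<in> X \<and> X \<inter> C = {}) :: real)" for X
    by simp
  then have "bernoulli_expectation p A (\<lambda>X. of_bool (e \<in> X \<or> X \<inter> C = {})) =
      p + (1 - p) ^ card C - p * (1 - p) ^ card C"
    using assms by (simp add: bernoulli_expectation_add bernoulli_expectation_diff
        bernoulli_prob_member bernoulli_prob_avoid bernoulli_prob_member_avoid)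
  then show ?thesis by (simp add: algebra_simps)
qed

lemma of_bool_and_not_not:
  assumes "B \<Longrightarrow> A" "C \<Longrightarrow> A"
  shows "(of_bool (A \<and> \<not> B \<and> \<not> C) :: real) = of_bool A - of_bool B - of_bool C + of_bool (B \<and> C)"
  using assms by (cases A; cases B; cases C) auto

lemma finite_all_edges: "finite (all_edges n)"
proof -
  have "all_edges n \<subseteq> Pow {..<n}" unfolding all_edges_def by auto
  then show ?thesis by (rule finite_subset) simp
qed

lemma gnp_expectation_eq_bernoulli:
  "gnp_expectation n p f = bernoulli_expectation p (all_edges n) f"
proof -
  have "gnp_prob n p E = bernoulli_weight p (all_edges n) E" if "E \<subseteq> all_edges n" for E
  proof -
    have "finite E" using that finite_all_edges by (rule finite_subset)
    have "bernoulli_weight p (all_edges n) E =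
        (\<Prod>e\<in>all_edges n \<inter> {e. e \<in> E}. p) * (\<Prod>e\<in>all_edges n \<inter> - {e. e \<in> E}. 1 - p)"
      unfolding bernoulli_weight_def by (rule prod.If_cases) (rule finite_all_edges)
    also have "all_edges n \<inter> {e. e \<in> E} = E" using that by auto
    also have "all_edges n \<inter> - {e. e \<in> E} = all_edges n - E" by auto
    finally show ?thesis
      using that \<open>finite E\<close> by (simp add: gnp_prob_def card_Diff_subset)
  qed
  then show ?thesis
    unfolding gnp_expectation_def bernoulli_expectation_def by (intro sum.cong) auto
qed

definition link_edges :: "'a \<Rightarrow> 'a set \<Rightarrow> 'a set set" where
  "link_edges v W = (\<lambda>w. {w, v}) ` W"

lemma finite_link_edges: "finite W \<Longrightarrow> finite (link_edges v W)"
  by (simp add: link_edges_def)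

lemma card_link_edges: "v \<notin> W \<Longrightarrow> card (link_edges v W) = card W"
  unfolding link_edges_def by (rule card_image) (auto simp: inj_on_def doubleton_eq_iff)

lemma link_edges_subset_all_edges:
  "v < n \<Longrightarrow> W \<subseteq> {..<n} - {v} \<Longrightarrow> link_edges v W \<subseteq> all_edges n"
  unfolding link_edges_def all_edges_def by blast

lemma disjoint_family_on_link_edges:
  assumes "I \<inter> W \<subseteq> {a}"
  shows "disjoint_family_on (\<lambda>i. link_edges i (W - {i})) I"
  unfolding disjoint_family_on_def link_edges_def
proof (intro ballI impI)
  fix i j assume "i \<in> I" "j \<in> I" "i \<noteq> j"
  with assms have "\<not> (i \<in> W \<and> j \<in> W)" by blast
  with \<open>i \<noteq> j\<close> show "(\<lambda>w. {w, i}) ` (W - {i}) \<inter> (\<lambda>w. {w, j}) ` (W - {j}) = {}"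
    by (auto simp: doubleton_eq_iff)
qed

lemma proper_star_k_separation_iff:
  assumes "S \<noteq> {}" "a < n" "S \<subseteq> {..<n} - {a}" "card S = k"
  defines "T \<equiv> {..<n} - insert a S"
  shows "proper_star_k_separation n E k a S \<longleftrightarrow>
    (\<forall>s\<in>S. {a, s} \<notin> E) \<and>
    (\<forall>v\<in>T. {a, v} \<in> E \<or> (\<forall>s\<in>S. {s, v} \<notin> E)) \<and>
    \<not> (\<forall>v\<in>T. {a, v} \<in> E) \<and>
    \<not> (\<forall>v\<in>T. \<forall>s\<in>S. {s, v} \<notin> E)"
    (is "_ \<longleftrightarrow> ?no_link \<and> ?closed \<and> \<not> ?all_adjacent \<and> \<not> ?S_isolated")
proof -
  let ?W = "{..<n} - st n E a"
  have W_minus_S: "?W - S = {v \<in> T. {a, v} \<notin> E}"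
    unfolding st_def T_def by auto
  have S_sub_W: "S \<subseteq> ?W \<longleftrightarrow> ?no_link"
    using assms(3) unfolding st_def by auto
  have star_sep: "star_separation n E a S \<longleftrightarrow> ?no_link \<and> ?closed \<and> \<not> ?all_adjacent"
  proof -
    have "star_separation n E a S \<longleftrightarrow> S \<subseteq> ?W \<and> S \<noteq> ?W \<and> (\<forall>u\<in>S. \<forall>v\<in>?W - S. {u, v} \<notin> E)"
      unfolding star_separation_def is_separation_def using assms(1,2) by simp
    moreover have "S \<noteq> ?W \<longleftrightarrow> \<not> ?all_adjacent" if "S \<subseteq> ?W"
      using that W_minus_S by blast
    moreover have "(\<forall>u\<in>S. \<forall>v\<in>?W - S. {u, v} \<notin> E) \<longleftrightarrow> ?closed"
      unfolding W_minus_S by blast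
    ultimately show ?thesis
      using S_sub_W by blast
  qed
  have global_sep: "is_separation E {..<n} S \<longleftrightarrow> ?S_isolated" if ?no_link
  proof -
    have "{..<n} - S = insert a T" using assms(2,3) unfolding T_def by auto
    moreover have "S \<noteq> {..<n}" using assms(2,3) by auto
    moreover have "\<forall>s\<in>S. {s, a} \<notin> E" using that by (metis insert_commute)
    then have "(\<forall>u\<in>S. \<forall>v\<in>insert a T. {u, v} \<notin> E) \<longleftrightarrow> ?S_isolated" by blast
    ultimately show ?thesis
      unfolding is_separation_def using assms(1,3) by auto
  qed
  show ?thesis
    unfolding proper_star_k_separation_def using star_sep global_sep assms(4) by blast
qed

definition star_event :: "'a \<Rightarrow> 'a set \<Rightarrow> 'a set \<Rightarrow> ('a \<Rightarrow> 'a set set \<Rightarrow> bool) \<Rightarrow> 'a set set \<Rightarrow> bool"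
  where "star_event a S T R E \<longleftrightarrow>
    E \<inter> link_edges a S = {} \<and> (\<forall>v\<in>T. R v (E \<inter> link_edges v (insert a S)))"

lemma proper_star_k_separation_indicator:
  assumes "S \<noteq> {}" "a < n" "S \<subseteq> {..<n} - {a}" "card S = k"
  defines "T \<equiv> {..<n} - insert a S"
  shows "(of_bool (proper_star_k_separation n E k a S) :: real) =
      of_bool (star_event a S T (\<lambda>v X. {a, v} \<in> X \<or> X \<inter> link_edges v S = {}) E)
    - of_bool (star_event a S T (\<lambda>v X. {a, v} \<in> X) E)
    - of_bool (star_event a S T (\<lambda>v X. X \<inter> link_edges v S = {}) E)
    + of_bool (star_event a S T (\<lambda>v X. {a, v} \<in> X \<and> X \<inter> link_edges v S = {}) E)"
proof -
  let ?event = "\<lambda>R. star_event a S T R E"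
  have "E \<inter> link_edges a S = {} \<longleftrightarrow> (\<forall>s\<in>S. {a, s} \<notin> E)"
    unfolding link_edges_def by (auto simp: insert_commute)
  moreover have "{a, v} \<in> E \<inter> link_edges v (insert a S) \<longleftrightarrow> {a, v} \<in> E"
    "E \<inter> link_edges v (insert a S) \<inter> link_edges v S = {} \<longleftrightarrow> (\<forall>s\<in>S. {s, v} \<notin> E)" for v
    unfolding link_edges_def by auto
  ultimately have "proper_star_k_separation n E k a S \<longleftrightarrow>
      ?event (\<lambda>v X. {a, v} \<in> X \<or> X \<inter> link_edges v S = {}) \<and>
      \<not> ?event (\<lambda>v X. {a, v} \<in> X) \<and> \<not> ?event (\<lambda>v X. X \<inter> link_edges v S = {})"
    unfolding proper_star_k_separation_iff[OF assms(1-4), folded T_def] star_event_def by auto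
  moreover have "?event (\<lambda>v X. {a, v} \<in> X \<and> X \<inter> link_edges v S = {}) \<longleftrightarrow>
      ?event (\<lambda>v X. {a, v} \<in> X) \<and> ?event (\<lambda>v X. X \<inter> link_edges v S = {})"
    unfolding star_event_def by auto
  ultimately show ?thesis
    by (simp only:) (rule of_bool_and_not_not; auto simp: star_event_def)
qed

lemma prob_star_event:
  assumes "a < n" "S \<subseteq> {..<n} - {a}" "T \<subseteq> {..<n} - insert a S"
    and "\<And>v. v \<in> T \<Longrightarrow> bernoulli_expectation p (link_edges v (insert a S)) (\<lambda>X. of_bool (R v X)) = q"
  shows "bernoulli_expectation p (all_edges n) (\<lambda>E. of_bool (star_event a S T R E)) =
    (1 - p) ^ card S * q ^ card T"
proof -
  \<comment> \<open>At \<open>i = a\<close> this is the block \<open>link_edges a S\<close>, at \<open>i \<in> T\<close> it is \<open>link_edges i (insert a S)\<close>.\<close>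
  define B where "B i = link_edges i (insert a S - {i})" for i
  define P where "P i X \<longleftrightarrow> (if i = a then X = {} else R i X)" for i X
  have "a \<notin> S" "a \<notin> T" "finite S" "finite T"
    using assms(2,3) by (auto intro: finite_subset)
  then have B_a: "B a = link_edges a S" and B_v: "\<And>v. v \<in> T \<Longrightarrow> B v = link_edges v (insert a S)"
    using assms(3) by (auto simp: B_def insert_Diff_if)
  have "star_event a S T R E \<longleftrightarrow> (\<forall>i\<in>insert a T. P i (E \<inter> B i))" for E
    using \<open>a \<notin> T\<close> B_a B_v by (auto simp: star_event_def P_def)
  then have "bernoulli_expectation p (all_edges n) (\<lambda>E. of_bool (star_event a S T R E)) =
      bernoulli_expectation p (all_edges n) (\<lambda>E. of_bool (\<forall>i\<in>insert a T. P i (E \<inter> B i)))"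
    by simp
  also have "\<dots> = (\<Prod>i\<in>insert a T. bernoulli_expectation p (B i) (\<lambda>X. of_bool (P i X)))"
  proof (rule bernoulli_expectation_independent_blocks[OF finite_all_edges])
    show "finite (insert a T)" using \<open>finite T\<close> by simp
    show "B i \<subseteq> all_edges n" if "i \<in> insert a T" for i
      using that assms(1-3) unfolding B_def by (intro link_edges_subset_all_edges) auto
    show "disjoint_family_on B (insert a T)"
      unfolding B_def using assms(3) by (intro disjoint_family_on_link_edges) auto
  qed
  also have "\<dots> = bernoulli_expectation p (B a) (\<lambda>X. of_bool (P a X)) *
      (\<Prod>v\<in>T. bernoulli_expectation p (B v) (\<lambda>X. of_bool (P v X)))"
    using \<open>finite T\<close> \<open>a \<notin> T\<close> by simp
  also have "(\<Prod>v\<in>T. bernoulli_expectation p (B v) (\<lambda>X. of_bool (P v X))) = (\<Prod>v\<in>T. q)"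
  proof (rule prod.cong[OF refl])
    fix v assume "v \<in> T"
    with \<open>a \<notin> T\<close> have "v \<noteq> a" by blast
    with \<open>v \<in> T\<close> show "bernoulli_expectation p (B v) (\<lambda>X. of_bool (P v X)) = q"
      using B_v assms(4) by (simp add: P_def)
  qed
  also have "bernoulli_expectation p (B a) (\<lambda>X. of_bool (P a X)) * (\<Prod>v\<in>T. q) =
      (1 - p) ^ card S * q ^ card T"
    using \<open>finite S\<close> \<open>a \<notin> S\<close> B_a
    by (simp add: P_def bernoulli_expectation_indicator_eq bernoulli_weight_empty card_link_edges
        finite_link_edges)
  finally show ?thesis .
qed

lemma prob_proper_star_k_separation:
  assumes "k > 0" "a < n" "S \<subseteq> {..<n} - {a}" "card S = k"
  shows "bernoulli_expectation p (all_edges n) (\<lambda>E. of_bool (proper_star_k_separation n E k a S)) =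
    (1 - p) ^ k * ((p + (1 - p) ^ (k + 1)) ^ (n - k - 1)
      + (1 - p ^ (n - k - 1)) * (1 - (1 - p) ^ (k * (n - k - 1))) - 1)"
proof -
  define T where "T = {..<n} - insert a S"
  define m where "m = n - k - 1"
  have "finite S" "a \<notin> S" using assms(3) by (auto intro: finite_subset)
  with assms(1,4) have "S \<noteq> {}" by auto
  have "card T = m"
    using assms(2-4) \<open>finite S\<close> \<open>a \<notin> S\<close> unfolding T_def m_def by (subst card_Diff_subset) auto
  have block: "finite (link_edges v (insert a S))" "insert {a, v} (link_edges v S) \<subseteq> link_edges v (insert a S)"
    "{a, v} \<notin> link_edges v S" "card (link_edges v S) = k" if "v \<in> T" for v
    using that assms(4) \<open>finite S\<close> \<open>a \<notin> S\<close>
    by (auto simp: T_def link_edges_def doubleton_eq_iff card_link_edges[unfolded link_edges_def])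
  have prob: "bernoulli_expectation p (all_edges n) (\<lambda>E. of_bool (star_event a S T R E)) = (1 - p) ^ k * q ^ m"
    if "\<And>v. v \<in> T \<Longrightarrow> bernoulli_expectation p (link_edges v (insert a S)) (\<lambda>X. of_bool (R v X)) = q"
    for R q
    using prob_star_event[of a n S T p R q] assms(2-4) that \<open>card T = m\<close> unfolding T_def by simp
  have "bernoulli_expectation p (link_edges v (insert a S))
        (\<lambda>X. of_bool ({a, v} \<in> X \<or> X \<inter> link_edges v S = {})) = p + (1 - p) ^ (k + 1)"
    "bernoulli_expectation p (link_edges v (insert a S)) (\<lambda>X. of_bool ({a, v} \<in> X)) = p"
    "bernoulli_expectation p (link_edges v (insert a S))
        (\<lambda>X. of_bool (X \<inter> link_edges v S = {})) = (1 - p) ^ k"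
    "bernoulli_expectation p (link_edges v (insert a S))
        (\<lambda>X. of_bool ({a, v} \<in> X \<and> X \<inter> link_edges v S = {})) = p * (1 - p) ^ k"
    if "v \<in> T" for v
    using bernoulli_prob_member_or_avoid[OF block(1-3)[OF that]]
      bernoulli_prob_member[OF block(1), of v] bernoulli_prob_avoid[OF block(1), of v]
      bernoulli_prob_member_avoid[OF block(1-3)[OF that]] block(2,4)[OF that] that
    by simp_all
  note block_probs = this[THEN prob]
  have "bernoulli_expectation p (all_edges n) (\<lambda>E. of_bool (proper_star_k_separation n E k a S)) =
      (1 - p) ^ k * (p + (1 - p) ^ (k + 1)) ^ m - (1 - p) ^ k * p ^ m
      - (1 - p) ^ k * ((1 - p) ^ k) ^ m + (1 - p) ^ k * (p * (1 - p) ^ k) ^ m"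
    unfolding proper_star_k_separation_indicator[OF \<open>S \<noteq> {}\<close> assms(2-4), folded T_def]
      bernoulli_expectation_add bernoulli_expectation_diff
    using block_probs by simp
  moreover have "((1 - p) ^ k) ^ m = (1 - p) ^ (k * m)" "(p * (1 - p) ^ k) ^ m = p ^ m * (1 - p) ^ (k * m)"
    by (simp_all add: power_mult power_mult_distrib)
  ultimately show ?thesis
    unfolding m_def[symmetric] by (simp add: algebra_simps)
qed

definition star_candidates :: "nat \<Rightarrow> nat \<Rightarrow> (nat \<times> nat set) set" where
  "star_candidates n k = (SIGMA a:{..<n}. {S. S \<subseteq> {..<n} - {a} \<and> card S = k})"

lemma card_star_candidates: "card (star_candidates n k) = n * ((n - 1) choose k)"
proof -
  have "card (star_candidates n k) = (\<Sum>a<n. card {S. S \<subseteq> {..<n} - {a} \<and> card S = k})"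
    unfolding star_candidates_def by (rule card_SigmaI) auto
  also have "\<dots> = (\<Sum>a<n. (n - 1) choose k)"
    by (intro sum.cong refl) (simp add: n_subsets)
  finally show ?thesis by simp
qed

lemma U_eq_sum_star_candidates:
  "real (U n k E) = (\<Sum>(a, S)\<in>star_candidates n k. of_bool (proper_star_k_separation n E k a S))"
proof -
  have "{(a, S). proper_star_k_separation n E k a S} =
      star_candidates n k \<inter> {(a, S). proper_star_k_separation n E k a S}"
    unfolding star_candidates_def proper_star_k_separation_def star_separation_def st_def by auto
  moreover have "finite (star_candidates n k)"
    unfolding star_candidates_def by (intro finite_SigmaI) auto
  ultimately show ?thesis
    unfolding U_def by (simp add: case_prod_unfold)
qed

theorem lemma3p2:
  fixes n k :: nat and p :: real
  assumes "k > 0" and "0 \<le> p" and "p \<le> 1"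
  shows "gnp_expectation n p (\<lambda>E. real (U n k E)) =
    real n * real ((n - 1) choose k) * (1 - p) ^ k *
    ((p + (1 - p) ^ (k + 1)) ^ (n - k - 1)
     + (1 - p ^ (n - k - 1)) * (1 - (1 - p) ^ (k * (n - k - 1))) - 1)"
proof -
  define c where "c = (1 - p) ^ k * ((p + (1 - p) ^ (k + 1)) ^ (n - k - 1)
     + (1 - p ^ (n - k - 1)) * (1 - (1 - p) ^ (k * (n - k - 1))) - 1)"
  have "gnp_expectation n p (\<lambda>E. real (U n k E)) =
      (\<Sum>(a, S)\<in>star_candidates n k. bernoulli_expectation p (all_edges n)
        (\<lambda>E. of_bool (proper_star_k_separation n E k a S)))"
    by (simp add: gnp_expectation_eq_bernoulli U_eq_sum_star_candidates bernoulli_expectation_sum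
        case_prod_unfold)
  also have "\<dots> = (\<Sum>_\<in>star_candidates n k. c)"
    unfolding c_def using assms(1)
    by (intro sum.cong refl) (auto simp: star_candidates_def prob_proper_star_k_separation)
  finally show ?thesis
    unfolding c_def by (simp add: card_star_candidates)
qed

end
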